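(* Let $\mathcal{F}$ be a $k$-uniform linear family and let $\nu=\nu(\mathcal{F})$. If $x$ is a vertex of $\mathcal{F}$ with $|\mathcal{F}_x|>k\nu$, then $x\in S_{\mathcal{F}}$.
   Context: A family is a finite collection of distinct subsets of a vertex set; it is $k$-uniform if every member has exactly $k$ elements and linear if any two distinct members share at most one vertex. A matching is a collection of pairwise disjoint members; $\nu(\mathcal{F})$ is the maximum size of a matching, and a maximum matching is one of that size. $\mathcal{F}_x=\{A\in\mathcal{F}:x\in A\}$. $S_{\mathcal{F}}$ denotes the set of vertices of $X_{\mathcal{F}}=\bigcup_{A\in\mathcal{F}}A$ that are covered by (i.e., belong to a member of) every maximum matching of $\mathcal{F}$. *)

theory Defs
  imports Main
begin

definition uniform :: "nat \<Rightarrow> 'a set set \<Rightarrow> bool" where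
  "uniform k F \<longleftrightarrow> (\<forall>A\<in>F. finite A \<and> card A = k)"

definition linear_family :: "'a set set \<Rightarrow> bool" where
  "linear_family F \<longleftrightarrow> (\<forall>A\<in>F. \<forall>B\<in>F. A \<noteq> B \<longrightarrow> card (A \<inter> B) \<le> 1)"

definition matching_in :: "'a set set \<Rightarrow> 'a set set \<Rightarrow> bool" where
  "matching_in F M \<longleftrightarrow> M \<subseteq> F \<and> (\<forall>A\<in>M. \<forall>B\<in>M. A \<noteq> B \<longrightarrow> A \<inter> B = {})"

definition matching_number :: "'a set set \<Rightarrow> nat" where
  "matching_number F = Max (card ` {M. matching_in F M})"

definition maximum_matching :: "'a set set \<Rightarrow> 'a set set \<Rightarrow> bool" where
  "maximum_matching F M \<longleftrightarrow> matching_in F M \<and> card M = matching_number F"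

definition star :: "'a set set \<Rightarrow> 'a \<Rightarrow> 'a set set" where
  "star F x = {A\<in>F. x \<in> A}"

definition covered_set :: "'a set set \<Rightarrow> 'a set" where
  "covered_set F = {v \<in> \<Union>F. \<forall>M. maximum_matching F M \<longrightarrow> v \<in> \<Union>M}"

end

theory Submission
  imports Defs
begin

text \<open>If some maximum matching \<open>M\<close> avoided \<open>x\<close>, every member of the star at \<open>x\<close> would
  meet \<open>\<Union>M\<close> (otherwise \<open>M\<close> could be enlarged), and by linearity two members of the star
  cannot meet \<open>\<Union>M\<close> in the same vertex, since they already share \<open>x\<close>. Hence
  \<open>|F\<^sub>x| \<le> |\<Union>M| \<le> k\<nu>\<close>.\<close>

lemma finite_matchings:
  assumes "finite F"
  shows "finite {M. matching_in F M}"
  by (rule finite_subset[of _ "Pow F"]) (auto simp: matching_in_def assms)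

lemma card_le_matching_number:
  assumes "finite F" and "matching_in F M"
  shows "card M \<le> matching_number F"
  unfolding matching_number_def using finite_matchings[OF assms(1)] assms(2) by (intro Max_ge) auto

lemma maximum_matching_meets:
  assumes "finite F" and "maximum_matching F M" and "A \<in> F" and "A \<notin> M"
  shows "A \<inter> \<Union>M \<noteq> {}"
proof
  assume disjoint: "A \<inter> \<Union>M = {}"
  have "matching_in F M" and card_M: "card M = matching_number F"
    using assms(2) by (auto simp: maximum_matching_def)
  then have "matching_in F (insert A M)"
    using assms(3) disjoint by (auto simp: matching_in_def)
  then have "card (insert A M) \<le> matching_number F"
    by (rule card_le_matching_number[OF assms(1)])
  moreover have "finite M"
    using \<open>matching_in F M\<close> assms(1) by (auto simp: matching_in_def intro: finite_subset)
  ultimately show False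
    using assms(4) card_M by simp
qed

lemma card_star_le_transversal:
  assumes "linear_family F" and "\<forall>A\<in>F. finite A"
    and "finite S" and "x \<notin> S" and "\<forall>A\<in>star F x. A \<inter> S \<noteq> {}"
  shows "card (star F x) \<le> card S"
proof -
  define pick where "pick A = (SOME y. y \<in> A \<inter> S)" for A
  have pick_in: "pick A \<in> A \<inter> S" if "A \<in> star F x" for A
    unfolding pick_def using assms(5) that by (metis all_not_in_conv someI_ex)
  have "inj_on pick (star F x)"
  proof (rule inj_onI, rule ccontr)
    fix A B assume A: "A \<in> star F x" and B: "B \<in> star F x"
      and same: "pick A = pick B" and "A \<noteq> B"
    then have "card (A \<inter> B) \<le> 1"
      using assms(1) by (auto simp: linear_family_def star_def)
    moreover have "{x, pick A} \<subseteq> A \<inter> B"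
      using A B pick_in[OF A] pick_in[OF B] same by (auto simp: star_def)
    moreover have "finite (A \<inter> B)"
      using A assms(2) by (auto simp: star_def)
    moreover have "card {x, pick A} = 2"
      using pick_in[OF A] assms(4) by (metis IntD2 card_2_iff)
    ultimately have "2 \<le> (1::nat)"
      by (metis card_mono order_trans)
    then show False
      by simp
  qed
  then show ?thesis
    using pick_in assms(3) by (intro card_inj_on_le) auto
qed

lemma card_Union_uniform_le:
  assumes "uniform k M" and "finite M"
  shows "card (\<Union>M) \<le> k * card M"
proof -
  have "card (\<Union>M) \<le> sum card M"
    by (rule card_Union_le_sum_card)
  also have "\<dots> = k * card M"
    using assms(1) by (simp add: uniform_def)
  finally show ?thesis .
qed

theorem proposition1:
  fixes F :: "'a set set" and k :: nat and x :: 'a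
  assumes "finite F"
    and "uniform k F"
    and "linear_family F"
    and "x \<in> \<Union>F"
    and "card (star F x) > k * matching_number F"
  shows "x \<in> covered_set F"
proof (rule ccontr)
  assume "x \<notin> covered_set F"
  with assms(4) obtain M where max: "maximum_matching F M" and "x \<notin> \<Union>M"
    by (auto simp: covered_set_def)
  then have "M \<subseteq> F" and card_M: "card M = matching_number F"
    by (auto simp: maximum_matching_def matching_in_def)
  then have "finite M" and "uniform k M"
    using assms(1,2) by (auto simp: uniform_def intro: finite_subset)
  have "\<forall>A\<in>star F x. A \<inter> \<Union>M \<noteq> {}"
    using maximum_matching_meets[OF assms(1) max] \<open>x \<notin> \<Union>M\<close> by (auto simp: star_def)
  moreover have "finite (\<Union>M)"
    using \<open>finite M\<close> \<open>uniform k M\<close> by (auto simp: uniform_def)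
  ultimately have "card (star F x) \<le> card (\<Union>M)"
    using card_star_le_transversal[OF assms(3)] assms(2) \<open>x \<notin> \<Union>M\<close>
    by (simp add: uniform_def)
  also have "\<dots> \<le> k * matching_number F"
    using card_Union_uniform_le[OF \<open>uniform k M\<close> \<open>finite M\<close>] card_M by simp
  finally show False
    using assms(5) by simp
qed

end
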